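(* Let $(t_j^i)_{0\le j\le i}$ be real numbers and let $h_{j,k}^i$ ($0\le k\le i$, $0\le j\le i-k$) be defined by $h_{j,0}^i=t_j^i$ and $h_{j,k}^i=h_{j,k-1}^{i-1}+h_{j,k-1}^{i}+h_{j+1,k-1}^{i}$ for $k\ge 1$. Then for any $0\leq k \leq i$, $0\leq j \leq i-k$, $$h^i_{j,k}=\sum_{r=i-k}^{i} \sum_{s=j}^{j+k-i+r} \binom{k}{s-j,\,i-r,\,k+j+r-s-i} t_{s}^{r}.$$
   Context: For non-negative integers $p,q,r$ with $p+q+r=n$, $\binom{n}{p,q,r}=\frac{n!}{p!\,q!\,r!}$ denotes the tetrahedron trinomial coefficient. *)

theory Defs
  imports Complex_Main
begin

text \<open>Trinomial coefficient n!/(p! q! r!), used only when p + q + r = n.\<close>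
definition trinom :: "nat \<Rightarrow> nat \<Rightarrow> nat \<Rightarrow> nat \<Rightarrow> real" where
  "trinom n p q r = fact n / (fact p * fact q * fact r)"

text \<open>hh t i j k = h^i_{j,k}, where t i j = t^i_j.\<close>
fun hh :: "(nat \<Rightarrow> nat \<Rightarrow> real) \<Rightarrow> nat \<Rightarrow> nat \<Rightarrow> nat \<Rightarrow> real" where
  "hh t i j 0 = t i j"
| "hh t i j (Suc k) = hh t (i - 1) j k + hh t i j k + hh t i (j + 1) k"

end

theory Submission
  imports Defs
begin

text \<open>The trinomial coefficients extended by zero obey the Pascal-type recurrence
  C(k+1; a, b) = C(k; a-1, b) + C(k; a, b) + C(k; a, b-1), mirroring the recurrence of h,
  in which raising j by one plays the role of a and lowering i by one that of b. Induction
  on k therefore gives h^i_{j,k} = \<Sum>_{a,b} C(k; a, b) t^{i-b}_{j+a}, and the substitution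
  r = i - b, s = j + a turns this into the stated formula.\<close>

definition trinom_coeff :: "nat \<Rightarrow> nat \<Rightarrow> nat \<Rightarrow> real" where
  "trinom_coeff k a b = (if a + b \<le> k then trinom k a b (k - a - b) else 0)"

lemma inverse_fact_pred: "(if n > 0 then 1 / fact (n - 1) else 0) = real n / (fact n :: real)"
proof (cases n)
  case (Suc m)
  have "fact (Suc m) = real (Suc m) * (fact m :: real)" by simp
  then show ?thesis using Suc by (simp del: of_nat_Suc fact_Suc)
qed simp

lemma trinom_Suc:
  assumes "a + b + c = Suc k"
  shows "trinom (Suc k) a b c =
    (if a > 0 then trinom k (a - 1) b c else 0) +
    (if b > 0 then trinom k a (b - 1) c else 0) +
    (if c > 0 then trinom k a b (c - 1) else 0)"
proof -
  have "real a + real b + real c = real (Suc k)" using assms by linarith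
  then have "trinom (Suc k) a b c =
      fact k / (fact a * fact b * fact c) * (real a + real b + real c)"
    by (simp add: trinom_def field_simps)
  also have "\<dots> = fact k / (fact b * fact c) * (real a / fact a) +
      fact k / (fact a * fact c) * (real b / fact b) +
      fact k / (fact a * fact b) * (real c / fact c)"
    by (simp add: field_simps)
  finally show ?thesis
    unfolding inverse_fact_pred[symmetric] by (simp add: trinom_def ac_simps)
qed

lemma trinom_coeff_Suc:
  "trinom_coeff (Suc k) a b =
     (if a > 0 then trinom_coeff k (a - 1) b else 0) + trinom_coeff k a b +
     (if b > 0 then trinom_coeff k a (b - 1) else 0)"
proof (cases "a + b \<le> Suc k")
  case True
  have rec: "trinom (Suc k) a b (Suc k - a - b) =
    (if a > 0 then trinom k (a - 1) b (Suc k - a - b) else 0) +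
    (if b > 0 then trinom k a (b - 1) (Suc k - a - b) else 0) +
    (if Suc k - a - b > 0 then trinom k a b (Suc k - a - b - 1) else 0)"
    by (rule trinom_Suc) (use True in simp)
  show ?thesis
  proof (cases "a + b \<le> k")
    case True
    then show ?thesis using rec by (auto simp: trinom_coeff_def Suc_diff_le)
  next
    case False
    with \<open>a + b \<le> Suc k\<close> have "a + b = Suc k" by simp
    with rec show ?thesis by (auto simp: trinom_coeff_def)
  qed
next
  case False
  then show ?thesis by (auto simp: trinom_coeff_def)
qed

lemma hh_eq_trinom_coeff_sum:
  assumes "k \<le> A" and "k \<le> B"
  shows "hh t i j k = (\<Sum>a\<le>A. \<Sum>b\<le>B. trinom_coeff k a b * t (i - b) (j + a))"
  using assms
proof (induction k arbitrary: i j A B)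
  case 0
  have "trinom_coeff 0 a b * x = (if b = 0 then if a = 0 then x else 0 else 0)" for a b x
    by (simp add: trinom_coeff_def trinom_def)
  then show ?case by (simp add: sum.delta)
next
  case (Suc k)
  obtain A' where A: "A = Suc A'" using Suc.prems by (cases A) auto
  obtain B' where B: "B = Suc B'" using Suc.prems by (cases B) auto
  have "(\<Sum>a\<le>A. \<Sum>b\<le>B. trinom_coeff (Suc k) a b * t (i - b) (j + a)) =
     (\<Sum>a\<le>A. \<Sum>b\<le>B. (if a > 0 then trinom_coeff k (a - 1) b else 0) * t (i - b) (j + a)) +
     (\<Sum>a\<le>A. \<Sum>b\<le>B. trinom_coeff k a b * t (i - b) (j + a)) +
     (\<Sum>a\<le>A. \<Sum>b\<le>B. (if b > 0 then trinom_coeff k a (b - 1) else 0) * t (i - b) (j + a))"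
    by (simp add: trinom_coeff_Suc distrib_right sum.distrib)
  also have "(\<Sum>a\<le>A. \<Sum>b\<le>B. trinom_coeff k a b * t (i - b) (j + a)) = hh t i j k"
    using Suc.IH[of A B i j] Suc.prems by simp
  also have "(\<Sum>a\<le>A. \<Sum>b\<le>B. (if a > 0 then trinom_coeff k (a - 1) b else 0) * t (i - b) (j + a))
     = (\<Sum>a\<le>A'. \<Sum>b\<le>B. trinom_coeff k a b * t (i - b) ((j + 1) + a))"
    unfolding A sum.atMost_Suc_shift by simp
  also have "\<dots> = hh t i (j + 1) k"
    using Suc.IH[of A' B i "j + 1"] Suc.prems A by simp
  also have "(\<Sum>a\<le>A. \<Sum>b\<le>B. (if b > 0 then trinom_coeff k a (b - 1) else 0) * t (i - b) (j + a))
     = (\<Sum>a\<le>A. \<Sum>b\<le>B'. trinom_coeff k a b * t (i - 1 - b) (j + a))"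
    unfolding B sum.atMost_Suc_shift by simp
  also have "\<dots> = hh t (i - 1) j k"
    using Suc.IH[of A B' "i - 1" j] Suc.prems B by simp
  finally show ?case by simp
qed

lemma hh_eq_triangle_sum:
  "hh t i j k = (\<Sum>b\<le>k. \<Sum>a\<le>k - b. trinom k a b (k - a - b) * t (i - b) (j + a))"
proof -
  have "hh t i j k = (\<Sum>b\<le>k. \<Sum>a\<le>k. trinom_coeff k a b * t (i - b) (j + a))"
    using hh_eq_trinom_coeff_sum[of k k k t i j] sum.swap by simp
  also have "\<dots> = (\<Sum>b\<le>k. \<Sum>a\<le>k - b. trinom_coeff k a b * t (i - b) (j + a))"
    by (intro sum.cong refl sum.mono_neutral_right) (auto simp: trinom_coeff_def)
  also have "\<dots> = (\<Sum>b\<le>k. \<Sum>a\<le>k - b. trinom k a b (k - a - b) * t (i - b) (j + a))"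
    by (intro sum.cong refl) (auto simp: trinom_coeff_def)
  finally show ?thesis .
qed

theorem corollary3:
  fixes t :: "nat \<Rightarrow> nat \<Rightarrow> real" and i j k :: nat
  assumes "k \<le> i" and "j \<le> i - k"
  shows "hh t i j k =
    (\<Sum>r = i - k..i. \<Sum>s = j..j + k + r - i.
       trinom k (s - j) (i - r) (k + j + r - s - i) * t r s)"
proof -
  have "hh t i j k = (\<Sum>r = i - k..i. \<Sum>a\<le>k - (i - r).
      trinom k a (i - r) (k - a - (i - r)) * t r (j + a))"
    unfolding hh_eq_triangle_sum
    by (rule sum.reindex_bij_witness[where i="\<lambda>r. i - r" and j="\<lambda>b. i - b"])
       (use assms in auto)
  also have "\<dots> = (\<Sum>r = i - k..i. \<Sum>s = j..j + k + r - i.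
       trinom k (s - j) (i - r) (k + j + r - s - i) * t r s)"
    by (intro sum.cong refl sum.reindex_bij_witness[where i="\<lambda>s. s - j" and j="\<lambda>a. j + a"])
       auto
  finally show ?thesis .
qed

end
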